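(* Let $D_{28}$ be the $28\times 28$ integer matrix $\begin{pmatrix} A & B\\ -B^T & A^T\end{pmatrix}$, where $A$ and $B$ are $14\times 14$ negacirculant matrices with first rows $r_A=(0,1,2,0,0,0,0,0,0,0,0,0,2,1)$ and $r_B=(-1,0,1,-1,0,2,-1,2,0,1,1,0,-1,2)$. (This matrix satisfies $D_{28}D_{28}^T=29I$ and $D_{28}^T=-D_{28}$.) Let $C_5(D_{28})$ be the $\mathbb{Z}_5$-code of length $56$ with generator matrix $(I\ \ D_{28})$, entries read modulo $5$. Then $A_5(C_5(D_{28}))$ contains a $k$-frame for every positive integer $k\ge 5$ that is not of the form $2^{m_1}3^{m_2}7^{m_3}17^{m_4}23^{m_5}$ with $m_1,\dots,m_5$ non-negative integers.
   Context: An $N\times N$ negacirculant matrix with first row $(r_0,\dots,r_{N-1})$ is the matrix whose $(i,j)$ entry ($0\le i,j\le N-1$) is $r_{j-i}$ if $j\ge i$ and $-r_{N+j-i}$ if $j<i$. Construction A: with $\rho:\mathbb{Z}_k\to\mathbb{Z}$ sending $0,1,\dots,k-1$ to $0,1,\dots,k-1$, for a $\mathbb{Z}_k$-code $C$ of length $N$ set $A_k(C)=\frac{1}{\sqrt{k}}\{\rho(C)+k\mathbb{Z}^N\}$. A $t$-frame of a lattice in dimension $N$ is a set of $N$ lattice vectors $f_1,\dots,f_N$ with $(f_i,f_j)=t\,\delta_{i,j}$. *)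

theory Defs
  imports Complex_Main
begin

text \<open>Matrices and vectors are functions on nat indices (0-based), only the entries
  with indices below the stated size being relevant.\<close>

definition negacirc :: "nat \<Rightarrow> (nat \<Rightarrow> int) \<Rightarrow> nat \<Rightarrow> nat \<Rightarrow> int" where
  "negacirc N r i j = (if j \<ge> i then r (j - i) else - r (N + j - i))"

definition rA :: "int list" where
  "rA = [0,1,2,0,0,0,0,0,0,0,0,0,2,1]"

definition rB :: "int list" where
  "rB = [-1,0,1,-1,0,2,-1,2,0,1,1,0,-1,2]"

definition matA :: "nat \<Rightarrow> nat \<Rightarrow> int" where
  "matA = negacirc 14 (\<lambda>n. rA ! n)"

definition matB :: "nat \<Rightarrow> nat \<Rightarrow> int" where
  "matB = negacirc 14 (\<lambda>n. rB ! n)"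

definition D28 :: "nat \<Rightarrow> nat \<Rightarrow> int" where
  "D28 i j =
     (if i < 14 then (if j < 14 then matA i j else matB i (j - 14))
      else (if j < 14 then - matB j (i - 14) else matA (j - 14) (i - 14)))"

text \<open>The Z_k-code of length N generated by the rows of the m x N integer matrix G
  (entries read modulo k); codewords are represented by their representatives in
  {0..k-1}, and are 0 outside the coordinates 0..N-1.\<close>
definition gen_code :: "int \<Rightarrow> nat \<Rightarrow> nat \<Rightarrow> (nat \<Rightarrow> nat \<Rightarrow> int) \<Rightarrow> (nat \<Rightarrow> int) set" where
  "gen_code k m N G = {c. \<exists>u :: nat \<Rightarrow> int.
      c = (\<lambda>j. if j < N then (\<Sum>i<m. u i * G i j) mod k else 0)}"

definition G_C5 :: "nat \<Rightarrow> nat \<Rightarrow> int" where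
  "G_C5 i j = (if j < 28 then (if i = j then 1 else 0) else D28 i (j - 28))"

definition C5_D28 :: "(nat \<Rightarrow> int) set" where
  "C5_D28 = gen_code 5 28 56 G_C5"

definition constructionA :: "nat \<Rightarrow> nat \<Rightarrow> (nat \<Rightarrow> int) set \<Rightarrow> (nat \<Rightarrow> real) set" where
  "constructionA k N C = {x. \<exists>c\<in>C. \<exists>z :: nat \<Rightarrow> int. (\<forall>j\<ge>N. z j = 0) \<and>
      x = (\<lambda>j. (of_int (c j) + of_nat k * of_int (z j)) / sqrt (of_nat k))}"

definition has_frame :: "(nat \<Rightarrow> real) set \<Rightarrow> nat \<Rightarrow> real \<Rightarrow> bool" where
  "has_frame L N t = (\<exists>f :: nat \<Rightarrow> nat \<Rightarrow> real.
      (\<forall>i<N. f i \<in> L) \<and>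
      (\<forall>i<N. \<forall>j<N. (\<Sum>l<N. f i l * f j l) = (if i = j then t else 0)))"

end

theory Submission
  imports Defs "HOL-Computational_Algebra.Primes" "HOL-Library.Discrete_Functions"
begin

text \<open>
  Let G be the 56 \<times> 56 matrix ((I, D), (D, I)) with D = D28. Its first 28 rows generate
  C5(D28) and, as D D^T = 29 I, its last 28 rows are congruent to D (I D) modulo 5. Since D is
  skew, G G^T = 30 I and G + G^T = 2 I. There are four signed permutation matrices V_a
  that are skew, orthogonal and pairwise anticommuting, and for which G V_a^T is skew. Then
  the rows of F = u G + 5 (t I + \<Sum> x_a V_a) satisfy F F^T = 5 k I with
  k = 6 u^2 + 2 u t + 5 t^2 + 5 \<Sum> x_a^2, and F \<equiv> u G modulo 5, so F / \<surd>5 is a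
  k-frame of A5(C5(D28)). By Lagrange's four-square theorem the last summand is any multiple
  of 5, and the values 0, 6, 22, 13, 9 of the binary form cover all residues modulo 5; the only
  k \<ge> 5 missed are 7, 8, 12 and 17, all of the excluded shape.
\<close>

section \<open>Lagrange's four-square theorem\<close>

definition sum_of_four_squares :: "int \<Rightarrow> bool" where
  "sum_of_four_squares n \<longleftrightarrow> (\<exists>a b c d. n = a^2 + b^2 + c^2 + d^2)"

lemma sum_of_four_squares_mult:
  assumes "sum_of_four_squares m" "sum_of_four_squares n"
  shows "sum_of_four_squares (m * n)"
proof -
  obtain a b c d where m: "m = a^2 + b^2 + c^2 + d^2"
    using assms(1) sum_of_four_squares_def by blast
  obtain e f g h where n: "n = e^2 + f^2 + g^2 + h^2"
    using assms(2) sum_of_four_squares_def by blast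
  have "m * n = (a*e + b*f + c*g + d*h)^2 + (a*f - b*e + c*h - d*g)^2
      + (a*g - b*h - c*e + d*f)^2 + (a*h + b*g - c*f - d*e)^2"
    unfolding m n by (simp add: power2_eq_square algebra_simps)
  then show ?thesis
    unfolding sum_of_four_squares_def by blast
qed

lemma sum_of_four_squares_half_pairs:
  fixes x y z w :: int
  assumes "x^2 + y^2 + z^2 + w^2 = 2 * m" "even (x + y)" "even (z + w)"
  shows "sum_of_four_squares m"
proof -
  obtain X Y Z W where XYZW: "x + y = 2 * X" "x - y = 2 * Y" "z + w = 2 * Z" "z - w = 2 * W"
    using assms(2,3) even_diff by (metis evenE)
  have "(x + y)^2 + (x - y)^2 + (z + w)^2 + (z - w)^2 = 2 * (x^2 + y^2 + z^2 + w^2)"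
    by (simp add: power2_eq_square algebra_simps)
  then have "4 * (X^2 + Y^2 + Z^2 + W^2) = 4 * m"
    using assms(1) unfolding XYZW by (simp add: power2_eq_square algebra_simps)
  then have "m = X^2 + Y^2 + Z^2 + W^2"
    by simp
  then show ?thesis
    unfolding sum_of_four_squares_def by blast
qed

lemma sum_of_four_squares_half:
  fixes x y z w :: int
  assumes "x^2 + y^2 + z^2 + w^2 = 2 * m"
  shows "sum_of_four_squares m"
proof -
  have "even (x^2 + y^2 + z^2 + w^2)"
    using assms by simp
  then have "even (x + y + z + w)"
    by (simp add: even_add)
  then consider "even (x + y)" "even (z + w)" | "even (x + z)" "even (y + w)"
    | "even (x + w)" "even (y + z)"
    by (auto simp: even_add)
  then show ?thesis
  proof cases
    case 1
    then show ?thesis using assms by (rule sum_of_four_squares_half_pairs[rotated])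
  next
    case 2
    moreover have "x^2 + z^2 + y^2 + w^2 = 2 * m" using assms by simp
    ultimately show ?thesis by (intro sum_of_four_squares_half_pairs)
  next
    case 3
    moreover have "x^2 + w^2 + y^2 + z^2 = 2 * m" using assms by simp
    ultimately show ?thesis by (intro sum_of_four_squares_half_pairs)
  qed
qed

lemma sum_of_four_squares_third_normalized:
  fixes x y z w :: int
  assumes "x^2 + y^2 + z^2 + w^2 = 3 * m"
    and "x mod 3 = 1" "y mod 3 = 1" "z mod 3 = 1" "w mod 3 = 0"
  shows "sum_of_four_squares m"
proof -
  have "3 dvd x + y + z" "3 dvd x - y + w" "3 dvd x - z - w" "3 dvd y - z + w"
    using assms(2-5) by presburger+
  then obtain A B C D where ABCD: "x + y + z = 3 * A" "x - y + w = 3 * B" "x - z - w = 3 * C"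
      "y - z + w = 3 * D"
    by (metis dvdE)
  \<comment> \<open>Euler's product of (x, y, z, w) with (1, 1, 1, 0)\<close>
  have "(x + y + z)^2 + (x - y + w)^2 + (x - z - w)^2 + (y - z + w)^2 = 3 * (x^2 + y^2 + z^2 + w^2)"
    by (simp add: power2_eq_square algebra_simps)
  then have "9 * (A^2 + B^2 + C^2 + D^2) = 9 * m"
    using assms(1) unfolding ABCD by (simp add: power2_eq_square algebra_simps)
  then have "m = A^2 + B^2 + C^2 + D^2"
    by simp
  then show ?thesis
    unfolding sum_of_four_squares_def by blast
qed

lemma square_mod_3: "(v::int)^2 mod 3 = (if 3 dvd v then 0 else 1)"
proof -
  have "v^2 mod 3 = (v mod 3)^2 mod 3"
    by (simp add: power_mod)
  moreover have "v mod 3 = 0 \<or> v mod 3 = 1 \<or> v mod 3 = 2"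
    by presburger
  ultimately show ?thesis
    by (auto simp: power2_eq_square)
qed

lemma sum_of_four_squares_third_one_divisible:
  fixes x y z w :: int
  assumes "x^2 + y^2 + z^2 + w^2 = 3 * m"
    and "\<not> 3 dvd x" "\<not> 3 dvd y" "\<not> 3 dvd z" "3 dvd w"
  shows "sum_of_four_squares m"
proof -
  have "\<exists>v'. v'^2 = v^2 \<and> v' mod 3 = 1" if "\<not> 3 dvd v" for v :: int
  proof (cases "v mod 3 = 1")
    case False
    then have "(- v) mod 3 = 1" using that by presburger
    then show ?thesis by (intro exI[of _ "- v"]) simp
  qed blast
  then obtain x' y' z' where "x'^2 = x^2" "x' mod 3 = 1" "y'^2 = y^2" "y' mod 3 = 1"
      "z'^2 = z^2" "z' mod 3 = 1"
    using assms(2-4) by meson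
  then show ?thesis
    using assms(1,5) by (intro sum_of_four_squares_third_normalized[of x' y' z' w]) simp_all
qed

lemma sum_of_four_squares_third:
  fixes x y z w :: int
  assumes "x^2 + y^2 + z^2 + w^2 = 3 * m"
    and "\<not> (3 dvd x \<and> 3 dvd y \<and> 3 dvd z \<and> 3 dvd w)"
  shows "sum_of_four_squares m"
proof -
  have mod_sum: "a + b + c + d \<in> {0, 3}"
    if "X + Y + Z + W = 3 * m" "X mod 3 = a" "Y mod 3 = b" "Z mod 3 = c" "W mod 3 = d"
      "a \<in> {0, 1}" "b \<in> {0, 1}" "c \<in> {0, 1}" "d \<in> {0, 1}" for X Y Z W a b c d :: int
    using that by simp presburger
  have "(if 3 dvd x then 0 else 1) + (if 3 dvd y then 0 else 1) + (if 3 dvd z then 0 else 1)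
      + (if 3 dvd w then 0 else 1) \<in> {0, 3::int}"
    by (rule mod_sum[OF assms(1) square_mod_3 square_mod_3 square_mod_3 square_mod_3]) simp_all
  then consider "\<not> 3 dvd x" "\<not> 3 dvd y" "\<not> 3 dvd z" "3 dvd w"
    | "\<not> 3 dvd x" "\<not> 3 dvd y" "3 dvd z" "\<not> 3 dvd w"
    | "\<not> 3 dvd x" "3 dvd y" "\<not> 3 dvd z" "\<not> 3 dvd w"
    | "3 dvd x" "\<not> 3 dvd y" "\<not> 3 dvd z" "\<not> 3 dvd w"
    using assms(2) by (auto split: if_splits)
  then show ?thesis
  proof cases
    case 1
    then show ?thesis using assms(1) by (intro sum_of_four_squares_third_one_divisible)
  next
    case 2
    moreover have "x^2 + y^2 + w^2 + z^2 = 3 * m" using assms(1) by simp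
    ultimately show ?thesis by (intro sum_of_four_squares_third_one_divisible)
  next
    case 3
    moreover have "x^2 + z^2 + w^2 + y^2 = 3 * m" using assms(1) by simp
    ultimately show ?thesis by (intro sum_of_four_squares_third_one_divisible)
  next
    case 4
    moreover have "y^2 + z^2 + w^2 + x^2 = 3 * m" using assms(1) by simp
    ultimately show ?thesis by (intro sum_of_four_squares_third_one_divisible)
  qed
qed

lemma eq_of_prime_dvd_diff_squares:
  fixes P a1 a2 :: int
  assumes "prime P" "0 \<le> a1" "0 \<le> a2" "2 * a1 < P" "2 * a2 < P" "P dvd a1^2 - a2^2"
  shows "a1 = a2"
proof -
  have "a1^2 - a2^2 = (a1 - a2) * (a1 + a2)"
    by (simp add: power2_eq_square algebra_simps)
  then have "P dvd a1 - a2 \<or> P dvd a1 + a2"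
    using assms(1,6) prime_dvd_mult_iff by metis
  moreover have "\<bar>a1 - a2\<bar> < P" "\<bar>a1 + a2\<bar> < P"
    using assms(2-5) by arith+
  moreover have small_multiple: "x = 0" if "P dvd x" "\<bar>x\<bar> < P" for x
  proof (rule ccontr)
    assume "x \<noteq> 0"
    then have "\<bar>P\<bar> \<le> \<bar>x\<bar>" using dvd_imp_le_int that(1) by blast
    then show False using that(2) by simp
  qed
  ultimately have "a1 - a2 = 0 \<or> a1 + a2 = 0"
    by blast
  then show ?thesis
    using assms(2,3) by linarith
qed

lemma prime_dvd_sum_two_squares_plus_one:
  assumes "prime p" "odd p"
  shows "\<exists>a b :: int. int p dvd a^2 + b^2 + 1"
proof (rule ccontr)
  assume none: "\<not> ?thesis"
  define P where "P = int p"
  define h where "h = (P - 1) div 2"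
  have "prime P" "2 * h + 1 = P"
    using assms by (simp_all add: P_def h_def odd_pos)
  define f where "f = (\<lambda>a. a^2 mod P)"
  define g where "g = (\<lambda>b. (- 1 - b^2) mod P)"
  have "inj_on f {0..h}" "inj_on g {0..h}"
    using eq_of_prime_dvd_diff_squares[OF \<open>prime P\<close>] \<open>2 * h + 1 = P\<close>
    by (auto simp: inj_on_def f_def g_def mod_eq_dvd_iff dvd_diff_commute)
  moreover have "f ` {0..h} \<inter> g ` {0..h} = {}"
  proof -
    have "f a \<noteq> g b" for a b
      using none by (auto simp: f_def g_def P_def mod_eq_dvd_iff algebra_simps)
    then show ?thesis by blast
  qed
  ultimately have "card (f ` {0..h} \<union> g ` {0..h}) = 2 * nat (h + 1)"
    by (simp add: card_Un_disjoint card_image)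
  moreover have "f ` {0..h} \<union> g ` {0..h} \<subseteq> {0..<P}"
    using prime_gt_0_int[OF \<open>prime P\<close>] by (auto simp: f_def g_def)
  then have "card (f ` {0..h} \<union> g ` {0..h}) \<le> nat P"
    using card_mono[of "{0..<P}"] by fastforce
  ultimately have "2 * nat (h + 1) \<le> nat P"
    by linarith
  then show False
    using \<open>2 * h + 1 = P\<close> prime_ge_2_int[OF \<open>prime P\<close>] by linarith
qed

lemma card_box4: "card ({0..int s} \<times> {0..int s} \<times> {0..int s} \<times> {0..int s}) = (s + 1) ^ 4"
proof -
  have "card {0..int s} = s + 1"
    by simp
  then show ?thesis
    by (simp add: card_cartesian_product power4_eq_xxxx mult.assoc del: Suc_eq_plus1)
qed

lemma exists_short_vector_mod:
  fixes P a b :: int and s :: nat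
  assumes "0 < P" "P^2 < (int s + 1)^4"
  obtains dx dy dz dw where "(dx, dy, dz, dw) \<noteq> (0, 0, 0, 0)"
    "\<bar>dx\<bar> \<le> int s" "\<bar>dy\<bar> \<le> int s" "\<bar>dz\<bar> \<le> int s" "\<bar>dw\<bar> \<le> int s"
    "P dvd dz - a * dx - b * dy" "P dvd dw - b * dx + a * dy"
proof -
  define I where "I = {0..int s}"
  define phi where "phi = (\<lambda>(x, y, z, w). ((z - a * x - b * y) mod P, (w - b * x + a * y) mod P))"
  have maps_to: "phi ` (I \<times> I \<times> I \<times> I) \<subseteq> {0..<P} \<times> {0..<P}"
    using assms(1) by (auto simp: phi_def)
  have fewer_residues: "card ({0..<P} \<times> {0..<P}) < card (I \<times> I \<times> I \<times> I)"
  proof -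
    have "int (nat P ^ 2) < int ((s + 1) ^ 4)"
      using assms by (simp add: add.commute)
    then have "nat P ^ 2 < (s + 1) ^ 4"
      by (simp only: of_nat_less_iff)
    moreover have "card (I \<times> I \<times> I \<times> I) = (s + 1) ^ 4"
      unfolding I_def by (rule card_box4)
    moreover have "card ({0..<P} \<times> {0..<P}) = nat P ^ 2"
      by (simp add: card_cartesian_product power2_eq_square)
    ultimately show ?thesis
      by simp
  qed
  have "\<not> inj_on phi (I \<times> I \<times> I \<times> I)"
  proof
    assume "inj_on phi (I \<times> I \<times> I \<times> I)"
    then have "card (I \<times> I \<times> I \<times> I) \<le> card ({0..<P} \<times> {0..<P})"
      using maps_to by (intro card_inj_on_le) auto
    then show False
      using fewer_residues by linarith
  qed
  then obtain v v' where "v \<in> I \<times> I \<times> I \<times> I" "v' \<in> I \<times> I \<times> I \<times> I" "v \<noteq> v'"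
      "phi v = phi v'"
    unfolding inj_on_def by meson
  moreover obtain x y z w x' y' z' w' where "v = (x, y, z, w)" "v' = (x', y', z', w')"
    by (cases v, cases v')
  ultimately have xyzw: "(x, y, z, w) \<in> I \<times> I \<times> I \<times> I"
      "(x', y', z', w') \<in> I \<times> I \<times> I \<times> I" "(x, y, z, w) \<noteq> (x', y', z', w')"
      and "phi (x, y, z, w) = phi (x', y', z', w')"
    by simp_all
  then have "(z - a * x - b * y) mod P = (z' - a * x' - b * y') mod P"
      "(w - b * x + a * y) mod P = (w' - b * x' + a * y') mod P"
    by (simp_all add: phi_def)
  then have "P dvd (z - a * x - b * y) - (z' - a * x' - b * y')"
      "P dvd (w - b * x + a * y) - (w' - b * x' + a * y')"
    by (simp_all only: mod_eq_dvd_iff)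
  moreover have "(z - a * x - b * y) - (z' - a * x' - b * y') = (z - z') - a * (x - x') - b * (y - y')"
      "(w - b * x + a * y) - (w' - b * x' + a * y') = (w - w') - b * (x - x') + a * (y - y')"
    by (simp_all add: algebra_simps)
  ultimately have "P dvd (z - z') - a * (x - x') - b * (y - y')"
      "P dvd (w - w') - b * (x - x') + a * (y - y')"
    by simp_all
  moreover have "\<bar>x - x'\<bar> \<le> int s" "\<bar>y - y'\<bar> \<le> int s"
      "\<bar>z - z'\<bar> \<le> int s" "\<bar>w - w'\<bar> \<le> int s"
    using xyzw(1,2) by (auto simp: I_def)
  ultimately show ?thesis
    using xyzw(3) by (intro that[of "x - x'" "y - y'" "z - z'" "w - w'"]) auto
qed

lemma prime_floor_sqrt_bounds:
  assumes "prime p"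
  shows "int (floor_sqrt p)^2 < int p" "(int p)^2 < (int (floor_sqrt p) + 1)^4"
proof -
  define s where "s = floor_sqrt p"
  have "s^2 \<noteq> p"
  proof
    assume "s^2 = p"
    then have "s dvd p" by (metis dvd_triv_left power2_eq_square)
    then have "s = 1 \<or> s = p" using assms prime_nat_iff by blast
    then show False using \<open>s^2 = p\<close> assms by (auto simp: power2_eq_square)
  qed
  then have "s^2 < p"
    using floor_sqrt_power2_le[of p] unfolding s_def by linarith
  then show "int (floor_sqrt p)^2 < int p"
    unfolding s_def by (metis of_nat_less_iff of_nat_power)
  have "p^2 < ((s + 1)^2)^2"
    using Suc_floor_sqrt_power2_gt[of p] by (intro power_strict_mono) (auto simp: s_def)
  then have "p^2 < (s + 1)^4"
    by (simp flip: power_mult)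
  then have "int (p^2) < int ((s + 1)^4)"
    by (simp only: of_nat_less_iff)
  then show "(int p)^2 < (int (floor_sqrt p) + 1)^4"
    by (simp only: s_def of_nat_power of_nat_add of_nat_1)
qed

lemma prime_small_multiple_sum_four_squares:
  assumes "prime p" "odd p"
  obtains x y z w r where "x^2 + y^2 + z^2 + w^2 = int p * r" "0 < r" "r < 4"
proof -
  define P where "P = int p"
  obtain a b where "P dvd a^2 + b^2 + 1"
    using prime_dvd_sum_two_squares_plus_one[OF assms] P_def by blast
  then obtain c where c: "a^2 + b^2 + 1 = P * c"
    by (elim dvdE)
  have "0 < P"
    using prime_gt_0_nat[OF assms(1)] by (simp add: P_def)
  define s where "s = floor_sqrt p"
  have s_sq_less: "int s^2 < P" and s_bound: "P^2 < (int s + 1)^4"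
    using prime_floor_sqrt_bounds[OF assms(1)] by (simp_all add: s_def P_def)
  from \<open>0 < P\<close> s_bound obtain dx dy dz dw where d: "(dx, dy, dz, dw) \<noteq> (0, 0, 0, 0)"
      "\<bar>dx\<bar> \<le> int s" "\<bar>dy\<bar> \<le> int s" "\<bar>dz\<bar> \<le> int s" "\<bar>dw\<bar> \<le> int s"
      "P dvd dz - a * dx - b * dy" "P dvd dw - b * dx + a * dy"
    by (rule exists_short_vector_mod)
  obtain k1 k2 where k: "dz = a * dx + b * dy + P * k1" "dw = b * dx - a * dy + P * k2"
    using d(6,7) by (metis dvdE diff_diff_eq eq_diff_eq add.commute diff_add_eq)
  define N where "N = dx^2 + dy^2 + dz^2 + dw^2"
  \<comment> \<open>(a dx + b dy)^2 + (b dx - a dy)^2 = (a^2 + b^2) (dx^2 + dy^2), so P divides N\<close>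
  have "N = (a^2 + b^2 + 1) * (dx^2 + dy^2)
      + P * (2 * k1 * (a * dx + b * dy) + P * k1^2 + 2 * k2 * (b * dx - a * dy) + P * k2^2)"
    unfolding N_def k by (simp add: power2_eq_square algebra_simps)
  also have "\<dots> = P * (c * (dx^2 + dy^2)
      + 2 * k1 * (a * dx + b * dy) + P * k1^2 + 2 * k2 * (b * dx - a * dy) + P * k2^2)"
    unfolding c by (simp add: algebra_simps)
  finally obtain r where r: "N = P * r"
    by blast
  have "N \<le> 4 * int s^2"
    unfolding N_def using d(2-5) abs_le_square_iff[of _ "int s"] by fastforce
  then have "N < 4 * P"
    using s_sq_less by linarith
  moreover have "0 < N"
    using d(1) by (auto simp: N_def add_pos_nonneg add_nonneg_pos)
  ultimately show ?thesis
    using r \<open>0 < P\<close> by (intro that[of dx dy dz dw r]) (auto simp: N_def P_def zero_less_mult_iff)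
qed

lemma sum_of_four_squares_prime:
  assumes "prime p"
  shows "sum_of_four_squares (int p)"
proof -
  consider "p = 2" | "p = 3" | "3 < p"
    using prime_ge_2_nat[OF assms] by linarith
  then show ?thesis
  proof cases
    case 1
    then have "int p = 1^2 + 1^2 + 0^2 + 0^2" by simp
    then show ?thesis unfolding sum_of_four_squares_def by blast
  next
    case 2
    then have "int p = 1^2 + 1^2 + 1^2 + 0^2" by simp
    then show ?thesis unfolding sum_of_four_squares_def by blast
  next
    case 3
    moreover have "odd p"
      using prime_odd_nat[OF assms] \<open>3 < p\<close> by simp
    ultimately obtain x y z w r where xyzw: "x^2 + y^2 + z^2 + w^2 = int p * r" and "0 < r" "r < 4"
      using prime_small_multiple_sum_four_squares[OF assms] by blast
    then consider "r = 1" | "r = 2" | "r = 3"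
      by linarith
    then show ?thesis
    proof cases
      case 1
      then show ?thesis using xyzw unfolding sum_of_four_squares_def by (metis mult.right_neutral)
    next
      case 2
      then show ?thesis using xyzw by (intro sum_of_four_squares_half[of x y z w]) simp
    next
      case r: 3
      have "\<not> (3 dvd x \<and> 3 dvd y \<and> 3 dvd z \<and> 3 dvd w)"
      proof
        assume "3 dvd x \<and> 3 dvd y \<and> 3 dvd z \<and> 3 dvd w"
        then have "9 dvd x^2 + y^2 + z^2 + w^2"
          by (auto simp: power2_eq_square intro!: dvd_add mult_dvd_mono[of 3 _ 3, simplified])
        then have "9 dvd 3 * int p"
          using xyzw r by (simp add: mult.commute)
        then have "3 dvd p"
          by presburger
        then have "3 = p"
          using assms by (intro primes_dvd_imp_eq) simp_all
        then show False
          using \<open>3 < p\<close> by simp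
      qed
      then show ?thesis
        using xyzw r by (intro sum_of_four_squares_third[of x y z w]) (simp_all add: mult.commute)
    qed
  qed
qed

theorem sum_of_four_squares_of_nat: "sum_of_four_squares (int n)"
proof (induction n rule: prime_divisors_induct)
  case zero
  have "int 0 = 0^2 + 0^2 + 0^2 + 0^2" by simp
  then show ?case unfolding sum_of_four_squares_def by blast
next
  case (unit x)
  then have "int x = 1^2 + 0^2 + 0^2 + 0^2" by simp
  then show ?case unfolding sum_of_four_squares_def by blast
next
  case (factor p x)
  then show ?case
    by (simp add: sum_of_four_squares_mult sum_of_four_squares_prime)
qed

section \<open>Dot products and a Gram identity\<close>

definition kronecker :: "nat \<Rightarrow> nat \<Rightarrow> 'a::{zero,one}" where
  "kronecker i j = (if i = j then 1 else 0)"

lemma kronecker_same [simp]: "kronecker i i = 1"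
  by (simp add: kronecker_def)

lemma kronecker_neq [simp]: "i \<noteq> j \<Longrightarrow> kronecker i j = 0"
  by (simp add: kronecker_def)

lemma kronecker_commute: "kronecker i j = kronecker j i"
  by (simp add: kronecker_def)

definition dot :: "nat \<Rightarrow> (nat \<Rightarrow> 'a::comm_ring_1) \<Rightarrow> (nat \<Rightarrow> 'a) \<Rightarrow> 'a" where
  "dot N v w = (\<Sum>l<N. v l * w l)"

lemma dot_commute: "dot N v w = dot N w v"
  by (simp add: dot_def mult.commute)

lemma dot_add_left [simp]: "dot N (\<lambda>l. v l + w l) z = dot N v z + dot N w z"
  by (simp add: dot_def distrib_right sum.distrib)

lemma dot_add_right [simp]: "dot N z (\<lambda>l. v l + w l) = dot N z v + dot N z w"
  by (simp add: dot_def distrib_left sum.distrib)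

lemma dot_scale_left [simp]: "dot N (\<lambda>l. c * v l) w = c * dot N v w"
  by (simp add: dot_def sum_distrib_left mult.assoc)

lemma dot_scale_right [simp]: "dot N v (\<lambda>l. c * w l) = c * dot N v w"
  by (simp add: dot_def sum_distrib_left mult.left_commute)

lemma dot_uminus_left [simp]: "dot N (\<lambda>l. - v l) w = - dot N v w"
  by (simp add: dot_def sum_negf)

lemma dot_uminus_right [simp]: "dot N v (\<lambda>l. - w l) = - dot N v w"
  by (simp add: dot_def sum_negf)

lemma dot_zero_left [simp]: "dot N (\<lambda>l. 0) w = 0"
  by (simp add: dot_def)

lemma dot_zero_right [simp]: "dot N v (\<lambda>l. 0) = 0"
  by (simp add: dot_def)

lemma dot_sum_left [simp]: "dot N (\<lambda>l. \<Sum>a\<in>A. f a l) w = (\<Sum>a\<in>A. dot N (f a) w)"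
  by (simp add: dot_def sum_distrib_right sum.swap[of _ A])

lemma dot_sum_right [simp]: "dot N v (\<lambda>l. \<Sum>a\<in>A. f a l) = (\<Sum>a\<in>A. dot N v (f a))"
  by (simp add: dot_def sum_distrib_left sum.swap[of _ A])

lemma dot_kronecker_left [simp]: "i < N \<Longrightarrow> dot N (kronecker i) w = w i"
  by (simp add: dot_def kronecker_def if_distrib[of "\<lambda>x. x * _"] cong: if_cong)

lemma dot_kronecker_right [simp]: "j < N \<Longrightarrow> dot N v (kronecker j) = v j"
  using dot_kronecker_left[of j N v] by (simp add: dot_commute)

lemma dot_lessThan_add:
  "dot (m + n) v w = dot m v w + dot n (\<lambda>l. v (m + l)) (\<lambda>l. w (m + l))"
  by (induction n) (simp_all add: dot_def add_ac)

definition clifford_elem ::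
    "'a \<Rightarrow> ('b \<Rightarrow> 'a) \<Rightarrow> ('b \<Rightarrow> nat \<Rightarrow> nat \<Rightarrow> 'a::comm_ring_1) \<Rightarrow> 'b set \<Rightarrow> nat \<Rightarrow> nat \<Rightarrow> 'a"
  where
  "clifford_elem t x V A i = (\<lambda>l. t * kronecker i l + (\<Sum>a\<in>A. x a * V a i l))"

lemma sum_sum_symmetrize:
  fixes c :: "'b \<Rightarrow> 'b \<Rightarrow> 'a::{idom,ring_char_0}"
  assumes "finite A" and "\<And>a b. a \<in> A \<Longrightarrow> b \<in> A \<Longrightarrow> c a b + c b a = (if a = b then 2 * d a else 0)"
  shows "(\<Sum>a\<in>A. \<Sum>b\<in>A. c a b) = (\<Sum>a\<in>A. d a)"
proof -
  have "2 * (\<Sum>a\<in>A. d a) = (\<Sum>a\<in>A. \<Sum>b\<in>A. if a = b then 2 * d a else 0)"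
    using assms(1) by (simp add: sum_distrib_left)
  also have "\<dots> = (\<Sum>a\<in>A. \<Sum>b\<in>A. c a b + c b a)"
    using assms(2) by (simp cong: sum.cong)
  also have "\<dots> = (\<Sum>a\<in>A. \<Sum>b\<in>A. c a b) + (\<Sum>a\<in>A. \<Sum>b\<in>A. c b a)"
    by (simp only: sum.distrib)
  also have "(\<Sum>a\<in>A. \<Sum>b\<in>A. c b a) = (\<Sum>a\<in>A. \<Sum>b\<in>A. c a b)"
    by (rule sum.swap)
  finally show ?thesis by simp
qed

lemma dot_clifford_elem:
  fixes V :: "'b \<Rightarrow> nat \<Rightarrow> nat \<Rightarrow> 'a::{idom,ring_char_0}"
  assumes "finite A" "i < N" "j < N"
    and skew: "\<And>a. a \<in> A \<Longrightarrow> V a i j + V a j i = 0"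
    and orth: "\<And>a. a \<in> A \<Longrightarrow> dot N (V a i) (V a j) = kronecker i j"
    and anticomm: "\<And>a b. a \<in> A \<Longrightarrow> b \<in> A \<Longrightarrow> a \<noteq> b \<Longrightarrow>
      dot N (V a i) (V b j) + dot N (V b i) (V a j) = 0"
  shows "dot N (clifford_elem t x V A i) (clifford_elem t x V A j)
    = kronecker i j * (t^2 + (\<Sum>a\<in>A. x a ^ 2))"
proof -
  have square: "(\<Sum>a\<in>A. x a * (\<Sum>b\<in>A. x b * dot N (V a i) (V b j))) = (\<Sum>a\<in>A. x a ^ 2 * kronecker i j)"
    unfolding sum_distrib_left
  proof (rule sum_sum_symmetrize[OF assms(1)])
    fix a b assume "a \<in> A" "b \<in> A"
    have "x a * (x b * dot N (V a i) (V b j)) + x b * (x a * dot N (V b i) (V a j))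
      = x a * x b * (dot N (V a i) (V b j) + dot N (V b i) (V a j))"
      by (simp add: algebra_simps)
    also have "\<dots> = (if a = b then 2 * (x a ^ 2 * kronecker i j) else 0)"
      using orth[OF \<open>a \<in> A\<close>] anticomm[OF \<open>a \<in> A\<close> \<open>b \<in> A\<close>]
      by (cases "a = b") (simp_all add: power2_eq_square)
    finally show "x a * (x b * dot N (V a i) (V b j)) + x b * (x a * dot N (V b i) (V a j))
      = (if a = b then 2 * (x a ^ 2 * kronecker i j) else 0)" .
  qed
  have linear: "(\<Sum>a\<in>A. x a * V a j i) + (\<Sum>a\<in>A. x a * V a i j) = 0"
    using skew by (simp add: sum.distrib[symmetric] distrib_left[symmetric] add.commute)
  have "dot N (clifford_elem t x V A i) (clifford_elem t x V A j)
    = t * (t * kronecker i j) + t * ((\<Sum>a\<in>A. x a * V a j i) + (\<Sum>a\<in>A. x a * V a i j))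
      + (\<Sum>a\<in>A. x a * (\<Sum>b\<in>A. x b * dot N (V a i) (V b j)))"
    using assms(2,3) by (simp add: clifford_elem_def distrib_left)
  also have "\<dots> = kronecker i j * (t^2 + (\<Sum>a\<in>A. x a ^ 2))"
    unfolding square linear by (simp add: sum_distrib_left power2_eq_square algebra_simps)
  finally show ?thesis .
qed

lemma dot_clifford_elem_mixed:
  fixes G :: "nat \<Rightarrow> nat \<Rightarrow> 'a::comm_ring_1"
  assumes "i < N" "j < N"
    and G_sym: "G i j + G j i = 2 * kronecker i j"
    and GV: "\<And>a. a \<in> A \<Longrightarrow> dot N (G i) (V a j) + dot N (G j) (V a i) = 0"
  shows "dot N (G i) (clifford_elem t x V A j) + dot N (G j) (clifford_elem t x V A i)
    = 2 * t * kronecker i j"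
proof -
  have "dot N (G i) (clifford_elem t x V A j) + dot N (G j) (clifford_elem t x V A i)
    = t * (G i j + G j i) + (\<Sum>a\<in>A. x a * (dot N (G i) (V a j) + dot N (G j) (V a i)))"
    using assms(1,2) by (simp add: clifford_elem_def sum.distrib algebra_simps)
  then show ?thesis
    using G_sym GV by simp
qed

definition frame_row :: "'a \<Rightarrow> 'a \<Rightarrow> 'a \<Rightarrow> ('b \<Rightarrow> 'a) \<Rightarrow> (nat \<Rightarrow> nat \<Rightarrow> 'a::comm_ring_1)
    \<Rightarrow> ('b \<Rightarrow> nat \<Rightarrow> nat \<Rightarrow> 'a) \<Rightarrow> 'b set \<Rightarrow> nat \<Rightarrow> nat \<Rightarrow> 'a"
  where
  "frame_row c u t x G V A i = (\<lambda>l. u * G i l + c * clifford_elem t x V A i l)"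

lemma dot_frame_row:
  fixes G :: "nat \<Rightarrow> nat \<Rightarrow> 'a::{idom,ring_char_0}"
  assumes "finite A" "i < N" "j < N"
    and G_gram: "dot N (G i) (G j) = g * kronecker i j"
    and G_sym: "G i j + G j i = 2 * kronecker i j"
    and GV: "\<And>a. a \<in> A \<Longrightarrow> dot N (G i) (V a j) + dot N (G j) (V a i) = 0"
    and V_skew: "\<And>a. a \<in> A \<Longrightarrow> V a i j + V a j i = 0"
    and orth: "\<And>a. a \<in> A \<Longrightarrow> dot N (V a i) (V a j) = kronecker i j"
    and anticomm: "\<And>a b. a \<in> A \<Longrightarrow> b \<in> A \<Longrightarrow> a \<noteq> b \<Longrightarrow>
      dot N (V a i) (V b j) + dot N (V b i) (V a j) = 0"
  shows "dot N (frame_row c u t x G V A i) (frame_row c u t x G V A j)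
    = kronecker i j * (g * u^2 + 2 * c * u * t + c^2 * (t^2 + (\<Sum>a\<in>A. x a ^ 2)))"
proof -
  let ?M = "clifford_elem t x V A"
  have "dot N (frame_row c u t x G V A i) (frame_row c u t x G V A j)
    = u^2 * dot N (G i) (G j) + c * u * (dot N (G i) (?M j) + dot N (G j) (?M i))
      + c^2 * dot N (?M i) (?M j)"
    by (simp add: frame_row_def dot_commute[of N "?M i"] power2_eq_square algebra_simps)
  also have "dot N (G i) (?M j) + dot N (G j) (?M i) = 2 * t * kronecker i j"
    using assms(2,3) G_sym GV by (rule dot_clifford_elem_mixed)
  also have "dot N (?M i) (?M j) = kronecker i j * (t^2 + (\<Sum>a\<in>A. x a ^ 2))"
    using assms(1-3) V_skew orth anticomm by (rule dot_clifford_elem)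
  also have "u^2 * dot N (G i) (G j) + c * u * (2 * t * kronecker i j)
      + c^2 * (kronecker i j * (t^2 + (\<Sum>a\<in>A. x a ^ 2)))
    = kronecker i j * (g * u^2 + 2 * c * u * t + c^2 * (t^2 + (\<Sum>a\<in>A. x a ^ 2)))"
    using G_gram by (simp add: algebra_simps)
  finally show ?thesis .
qed

section \<open>Block matrices\<close>

definition block_mat :: "nat \<Rightarrow> (nat \<Rightarrow> nat \<Rightarrow> 'a) \<Rightarrow> (nat \<Rightarrow> nat \<Rightarrow> 'a) \<Rightarrow> (nat \<Rightarrow> nat \<Rightarrow> 'a)
    \<Rightarrow> (nat \<Rightarrow> nat \<Rightarrow> 'a) \<Rightarrow> nat \<Rightarrow> nat \<Rightarrow> 'a" where
  "block_mat n A B C E i = (\<lambda>l.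
     if i < n then if l < n then A i l else B i (l - n)
     else if l < n then C (i - n) l else E (i - n) (l - n))"

lemma dot_cong:
  "(\<And>l. l < N \<Longrightarrow> v l = v' l) \<Longrightarrow> (\<And>l. l < N \<Longrightarrow> w l = w' l)
    \<Longrightarrow> dot N v w = dot N v' w'"
  by (simp add: dot_def)

lemma dot_block_mat:
  "dot (n + n) (block_mat n A B C E i) (block_mat n A' B' C' E' j)
   = dot n (if i < n then A i else C (i - n)) (if j < n then A' j else C' (j - n))
     + dot n (if i < n then B i else E (i - n)) (if j < n then B' j else E' (j - n))"
  unfolding dot_lessThan_add by (intro arg_cong2[where f = "(+)"] dot_cong) (simp_all add: block_mat_def)

definition code_block :: "nat \<Rightarrow> (nat \<Rightarrow> nat \<Rightarrow> 'a::{zero,one}) \<Rightarrow> nat \<Rightarrow> nat \<Rightarrow> 'a" where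
  "code_block n D = block_mat n kronecker D D kronecker"

definition lift_unit ::
    "nat \<Rightarrow> ('b \<Rightarrow> nat \<Rightarrow> nat \<Rightarrow> 'a::comm_ring_1) \<Rightarrow> 'b option \<Rightarrow> nat \<Rightarrow> nat \<Rightarrow> 'a"
  where
  "lift_unit n Q a = (case a of
      None \<Rightarrow> block_mat n (\<lambda>_ _. 0) kronecker (\<lambda>i l. - kronecker i l) (\<lambda>_ _. 0)
    | Some b \<Rightarrow> block_mat n (Q b) (\<lambda>_ _. 0) (\<lambda>_ _. 0) (\<lambda>i l. - Q b i l))"

lemma dot_code_block:
  fixes D :: "nat \<Rightarrow> nat \<Rightarrow> 'a::comm_ring_1"
  assumes D_skew: "\<And>i j. i < n \<Longrightarrow> j < n \<Longrightarrow> D i j + D j i = 0"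
    and D_gram: "\<And>i j. i < n \<Longrightarrow> j < n \<Longrightarrow> dot n (D i) (D j) = p * kronecker i j"
    and "i < n + n" "j < n + n"
  shows "dot (n + n) (code_block n D i) (code_block n D j) = (p + 1) * kronecker i j"
  using assms(3,4) by (cases "i < n"; cases "j < n")
    (auto simp: code_block_def dot_block_mat kronecker_def D_skew D_gram algebra_simps)

lemma code_block_sym:
  fixes D :: "nat \<Rightarrow> nat \<Rightarrow> 'a::comm_ring_1"
  assumes D_skew: "\<And>i j. i < n \<Longrightarrow> j < n \<Longrightarrow> D i j + D j i = 0"
    and "i < n + n" "j < n + n"
  shows "code_block n D i j + code_block n D j i = 2 * kronecker i j"
  using assms(2,3) by (cases "i < n"; cases "j < n";
    auto simp: code_block_def block_mat_def D_skew eq_neg_iff_add_eq_0; auto simp: kronecker_def)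

lemma lift_unit_skew:
  assumes Q_skew: "\<And>b i j. b \<in> A \<Longrightarrow> i < n \<Longrightarrow> j < n \<Longrightarrow> Q b i j + Q b j i = 0"
    and "a \<in> insert None (Some ` A)" "i < n + n" "j < n + n"
  shows "lift_unit n Q a i j + lift_unit n Q a j i = 0"
  using assms(2-4) by (cases "i < n"; cases "j < n";
    auto simp: lift_unit_def block_mat_def Q_skew eq_neg_iff_add_eq_0 neg_eq_iff_add_eq_0;
    auto simp: kronecker_def)

lemma dot_code_block_lift_unit:
  assumes D_skew: "\<And>i j. i < n \<Longrightarrow> j < n \<Longrightarrow> D i j + D j i = 0"
    and Q_skew: "\<And>b i j. b \<in> A \<Longrightarrow> i < n \<Longrightarrow> j < n \<Longrightarrow> Q b i j + Q b j i = 0"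
    and DQ_sym: "\<And>b i j. b \<in> A \<Longrightarrow> i < n \<Longrightarrow> j < n \<Longrightarrow>
      dot n (D i) (Q b j) = dot n (D j) (Q b i)"
    and "a \<in> insert None (Some ` A)" "i < n + n" "j < n + n"
  shows "dot (n + n) (code_block n D i) (lift_unit n Q a j)
    + dot (n + n) (code_block n D j) (lift_unit n Q a i) = 0"
  using assms(4-6) by (cases "i < n"; cases "j < n";
    auto simp: code_block_def lift_unit_def dot_block_mat D_skew Q_skew DQ_sym
      eq_neg_iff_add_eq_0 neg_eq_iff_add_eq_0; auto simp: kronecker_def)

lemma dot_lift_unit_orth:
  assumes Q_orth: "\<And>b i j. b \<in> A \<Longrightarrow> i < n \<Longrightarrow> j < n \<Longrightarrow>
      dot n (Q b i) (Q b j) = kronecker i j"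
    and "a \<in> insert None (Some ` A)" "i < n + n" "j < n + n"
  shows "dot (n + n) (lift_unit n Q a i) (lift_unit n Q a j) = kronecker i j"
  using assms(2-4) by (cases "i < n"; cases "j < n";
    auto simp: lift_unit_def dot_block_mat Q_orth; auto simp: kronecker_def)

lemma dot_lift_unit_anticomm:
  assumes Q_skew: "\<And>b i j. b \<in> A \<Longrightarrow> i < n \<Longrightarrow> j < n \<Longrightarrow> Q b i j + Q b j i = 0"
    and Q_anticomm: "\<And>b b' i j. b \<in> A \<Longrightarrow> b' \<in> A \<Longrightarrow> b \<noteq> b' \<Longrightarrow>
      i < n \<Longrightarrow> j < n \<Longrightarrow>
      dot n (Q b i) (Q b' j) + dot n (Q b' i) (Q b j) = 0"
    and "a \<in> insert None (Some ` A)" "a' \<in> insert None (Some ` A)" "a \<noteq> a'"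
      "i < n + n" "j < n + n"
  shows "dot (n + n) (lift_unit n Q a i) (lift_unit n Q a' j)
    + dot (n + n) (lift_unit n Q a' i) (lift_unit n Q a j) = 0"
  using assms(3-7) by (cases a; cases a'; cases "i < n"; cases "j < n")
    (auto simp: lift_unit_def dot_block_mat Q_skew Q_anticomm eq_neg_iff_add_eq_0 neg_eq_iff_add_eq_0)

lemma sum_mult_code_block_column:
  fixes D :: "nat \<Rightarrow> nat \<Rightarrow> 'a::comm_ring_1"
  assumes D_skew: "\<And>i j. i < n \<Longrightarrow> j < n \<Longrightarrow> D i j + D j i = 0"
    and "j < n + n"
  shows "(\<Sum>m<n. w m * code_block n D m j) = (if j < n then w j else - dot n w (D (j - n)))"
proof (cases "j < n")
  case True
  then have "(\<Sum>m<n. w m * code_block n D m j) = dot n w (kronecker j)"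
    unfolding dot_def by (intro sum.cong) (auto simp: code_block_def block_mat_def kronecker_commute)
  then show ?thesis using True by simp
next
  case False
  then have "(\<Sum>m<n. w m * code_block n D m j) = dot n w (\<lambda>m. - D (j - n) m)"
    unfolding dot_def using assms(2)
    by (intro sum.cong) (auto simp: code_block_def block_mat_def eq_neg_iff_add_eq_0 D_skew
        simp flip: distrib_left)
  then show ?thesis using False by simp
qed

text \<open>The first n rows of the code block are the generator matrix (I D). As D D = - p I, its
  last n rows are congruent to D (I D) modulo every divisor of p + 1.\<close>

lemma code_block_row_cong:
  fixes D :: "nat \<Rightarrow> nat \<Rightarrow> int"
  assumes D_skew: "\<And>i j. i < n \<Longrightarrow> j < n \<Longrightarrow> D i j + D j i = 0"
    and D_gram: "\<And>i j. i < n \<Longrightarrow> j < n \<Longrightarrow> dot n (D i) (D j) = p * kronecker i j"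
    and "q dvd p + 1" "i < n + n"
  obtains w where "\<And>j. j < n + n \<Longrightarrow>
    (\<Sum>m<n. w m * code_block n D m j) mod q = code_block n D i j mod q"
proof (cases "i < n")
  case True
  show ?thesis
  proof (rule that[of "kronecker i"])
    fix j assume j: "j < n + n"
    have "(\<Sum>m<n. kronecker i m * code_block n D m j) = (if j < n then kronecker i j else - D (j - n) i)"
      using sum_mult_code_block_column[OF D_skew j] True by simp
    also have "\<dots> = code_block n D i j"
      using True j D_skew[of "j - n" i] by (auto simp: code_block_def block_mat_def neg_eq_iff_add_eq_0)
    finally show "(\<Sum>m<n. kronecker i m * code_block n D m j) mod q = code_block n D i j mod q"
      by simp
  qed
next
  case False
  show ?thesis
  proof (rule that[of "D (i - n)"])
    fix j assume j: "j < n + n"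
    show "(\<Sum>m<n. D (i - n) m * code_block n D m j) mod q = code_block n D i j mod q"
    proof (cases "j < n")
      case True
      then show ?thesis
        using False by (simp only: sum_mult_code_block_column[OF D_skew j])
          (simp add: code_block_def block_mat_def)
    next
      case j_high: False
      let ?k = "kronecker (i - n) (j - n) :: int"
      have "- (p * ?k) - ?k = - ((p + 1) * ?k)"
        by (simp add: algebra_simps)
      then have "q dvd - (p * ?k) - ?k"
        using assms(3) by (simp add: dvd_mult2)
      then have "(- (p * ?k)) mod q = ?k mod q"
        by (simp only: mod_eq_dvd_iff)
      then show ?thesis
        using False j_high j assms(4) by (simp only: sum_mult_code_block_column[OF D_skew j])
          (simp add: D_gram code_block_def block_mat_def)
    qed
  qed
qed

section \<open>Construction A\<close>

lemma gen_code_memI: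
  assumes "\<And>j. j < N \<Longrightarrow> (\<Sum>i<m. u i * G i j) mod k = f j mod k"
  shows "(\<lambda>j. if j < N then f j mod k else 0) \<in> gen_code k m N G"
  unfolding gen_code_def by (intro CollectI exI[of _ u] ext) (simp add: assms)

lemma has_frame_constructionA:
  fixes f :: "nat \<Rightarrow> nat \<Rightarrow> int" and q t :: nat
  assumes "0 < q"
    and code: "\<And>i. i < N \<Longrightarrow> (\<lambda>j. if j < N then f i j mod int q else 0) \<in> C"
    and gram: "\<And>i j. i < N \<Longrightarrow> j < N \<Longrightarrow> dot N (f i) (f j) = int (q * t) * kronecker i j"
  shows "has_frame (constructionA q N C) N (real t)"
proof -
  define e where "e i = (\<lambda>l. (if l < N then of_int (f i l) else 0) / sqrt (real q))" for i
  have "e i \<in> constructionA q N C" if "i < N" for i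
  proof -
    define z where "z j = (if j < N then f i j div int q else 0)" for j
    have "real_of_int (a mod int q) + real q * real_of_int (a div int q) = real_of_int a" for a
      using mod_mult_div_eq[of a "int q"] by (metis of_int_add of_int_mult of_int_of_nat_eq)
    then have e_eq: "e i = (\<lambda>j. (of_int (if j < N then f i j mod int q else 0) + of_nat q * of_int (z j))
        / sqrt (of_nat q))"
      by (auto simp: e_def z_def)
    have z_zero: "\<forall>j\<ge>N. z j = 0"
      by (simp add: z_def)
    show ?thesis
      unfolding constructionA_def
      by (rule CollectI, rule bexI[OF _ code[OF that]], rule exI[of _ z]) (intro conjI z_zero e_eq)
  qed
  moreover have "(\<Sum>l<N. e i l * e j l) = (if i = j then real t else 0)" if "i < N" "j < N" for i j
  proof -
    have "(\<Sum>l<N. e i l * e j l) = of_int (dot N (f i) (f j)) / real q"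
      using assms(1) by (simp add: e_def dot_def sum_divide_distrib)
    then show ?thesis
      using gram[OF that] assms(1) by (simp add: kronecker_def)
  qed
  ultimately show ?thesis
    unfolding has_frame_def by blast
qed

section \<open>The matrix D28 and three anticommuting units\<close>

text \<open>Entrywise facts about concrete 28 \<times> 28 matrices are checked by evaluating row lists.\<close>

definition rows :: "nat \<Rightarrow> (nat \<Rightarrow> nat \<Rightarrow> 'a) \<Rightarrow> 'a list list" where
  "rows n M = map (\<lambda>i. map (M i) [0..<n]) [0..<n]"

lemma rows_eq_iff: "rows n M = rows n M' \<longleftrightarrow> (\<forall>i<n. \<forall>j<n. M i j = M' i j)"
  by (auto simp: rows_def map_eq_conv)

definition cross_rows :: "'a::comm_ring_1 list list \<Rightarrow> 'a list list \<Rightarrow> 'a list list" where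
  "cross_rows rs ss = map (\<lambda>r. map (\<lambda>s. sum_list (map2 (*) r s)) ss) rs"

lemma cross_rows_rows: "cross_rows (rows n M) (rows n M') = rows n (\<lambda>i j. dot n (M i) (M' j))"
  by (simp add: rows_def cross_rows_def dot_def map2_map_map interv_sum_list_conv_sum_set_nat
      atLeast0LessThan)

lemma D28_skew:
  assumes "i < 28" "j < 28"
  shows "D28 i j + D28 j i = 0"
proof -
  have "rows 28 (\<lambda>i j. D28 i j + D28 j i) = rows 28 (\<lambda>_ _. 0)"
    by code_simp
  then show ?thesis
    using assms unfolding rows_eq_iff by blast
qed

lemma D28_gram:
  assumes "i < 28" "j < 28"
  shows "dot 28 (D28 i) (D28 j) = 29 * kronecker i j"
proof -
  have "cross_rows (rows 28 D28) (rows 28 D28) = rows 28 (\<lambda>i j. 29 * kronecker i j)"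
    by code_simp
  then show ?thesis
    using assms unfolding cross_rows_rows rows_eq_iff by blast
qed

definition signed_perm_mat :: "(nat \<Rightarrow> nat) \<Rightarrow> (nat \<Rightarrow> 'a::zero) \<Rightarrow> nat \<Rightarrow> nat \<Rightarrow> 'a" where
  "signed_perm_mat p s i = (\<lambda>l. if l = p i then s i else 0)"

lemma dot_signed_perm_mat_right: "p j < N \<Longrightarrow> dot N v (signed_perm_mat p s j) = s j * v (p j)"
  by (simp add: dot_def signed_perm_mat_def if_distrib[of "\<lambda>y. _ * y"] mult.commute cong: if_cong)

datatype quat_unit = Ui | Uj | Uk

text \<open>On each half Z[x]/(x^14 + 1) of the index range, J is multiplication by x^7, and
  X = ((0, R), (-R, 0)) with R the automorphism x \<mapsto> x^-1; the third unit is J X.\<close>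

definition J_perm :: "nat \<Rightarrow> nat" where
  "J_perm i = (if i mod 14 < 7 then i + 7 else i - 7)"

definition J_sign :: "nat \<Rightarrow> int" where
  "J_sign i = (if i mod 14 < 7 then 1 else -1)"

definition X_perm :: "nat \<Rightarrow> nat" where
  "X_perm i = (if i mod 14 = 0 then 14 - i else 28 - i)"

definition X_sign :: "nat \<Rightarrow> int" where
  "X_sign i = (if i = 0 \<or> 14 < i then 1 else -1)"

definition unit_perm :: "quat_unit \<Rightarrow> nat \<Rightarrow> nat" where
  "unit_perm u = (case u of Ui \<Rightarrow> J_perm | Uj \<Rightarrow> X_perm | Uk \<Rightarrow> X_perm \<circ> J_perm)"

definition unit_sign :: "quat_unit \<Rightarrow> nat \<Rightarrow> int" where
  "unit_sign u =
    (case u of Ui \<Rightarrow> J_sign | Uj \<Rightarrow> X_sign | Uk \<Rightarrow> (\<lambda>i. J_sign i * X_sign (J_perm i)))"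

definition unit_mat :: "quat_unit \<Rightarrow> nat \<Rightarrow> nat \<Rightarrow> int" where
  "unit_mat u = signed_perm_mat (unit_perm u) (unit_sign u)"

lemma J_perm_less: "i < 28 \<Longrightarrow> J_perm i < 28"
  unfolding J_perm_def by presburger

lemma X_perm_less: "i < 28 \<Longrightarrow> X_perm i < 28"
  by (auto simp: X_perm_def)

lemma unit_perm_less: "i < 28 \<Longrightarrow> unit_perm u i < 28"
  by (cases u) (simp_all add: unit_perm_def J_perm_less X_perm_less)

lemma dot_unit_mat_right: "j < 28 \<Longrightarrow> dot 28 v (unit_mat u j) = unit_sign u j * v (unit_perm u j)"
  by (simp add: unit_mat_def dot_signed_perm_mat_right unit_perm_less)

lemma unit_mat_skew:
  assumes "i < 28" "j < 28"
  shows "unit_mat u i j + unit_mat u j i = 0"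
proof -
  have "rows 28 (\<lambda>i j. unit_mat u i j + unit_mat u j i) = rows 28 (\<lambda>_ _. 0)"
    by (induct u) code_simp+
  then show ?thesis
    using assms unfolding rows_eq_iff by blast
qed

lemma unit_mat_orth:
  assumes "i < 28" "j < 28"
  shows "dot 28 (unit_mat u i) (unit_mat u j) = kronecker i j"
proof -
  have "rows 28 (\<lambda>i j. unit_sign u j * unit_mat u i (unit_perm u j)) = rows 28 kronecker"
    by (induct u) code_simp+
  then show ?thesis
    using assms unfolding rows_eq_iff by (simp add: dot_unit_mat_right)
qed

lemma unit_mat_anticomm:
  assumes "u \<noteq> u'" "i < 28" "j < 28"
  shows "dot 28 (unit_mat u i) (unit_mat u' j) + dot 28 (unit_mat u' i) (unit_mat u j) = 0"
proof -
  from assms(1) have "rows 28 (\<lambda>i j. unit_sign u' j * unit_mat u i (unit_perm u' j)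
      + unit_sign u j * unit_mat u' i (unit_perm u j)) = rows 28 (\<lambda>_ _. 0)"
    by (induct u; induct u') code_simp+
  then show ?thesis
    using assms(2,3) unfolding rows_eq_iff by (simp add: dot_unit_mat_right)
qed

lemma D28_unit_mat_sym:
  assumes "i < 28" "j < 28"
  shows "dot 28 (D28 i) (unit_mat u j) = dot 28 (D28 j) (unit_mat u i)"
proof -
  have "rows 28 (\<lambda>i j. unit_sign u j * D28 i (unit_perm u j))
      = rows 28 (\<lambda>i j. unit_sign u i * D28 j (unit_perm u i))"
    by (induct u) code_simp+
  then show ?thesis
    using assms unfolding rows_eq_iff by (simp add: dot_unit_mat_right)
qed

section \<open>Frames in A5(C5(D28))\<close>

lemma G_C5_eq_code_block: "m < 28 \<Longrightarrow> G_C5 m j = code_block 28 D28 m j"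
  by (simp add: G_C5_def code_block_def block_mat_def kronecker_def)

lemma UNIV_quat_unit: "(UNIV :: quat_unit set) = {Ui, Uj, Uk}"
  using quat_unit.exhaust by auto

definition D28_frame :: "int \<Rightarrow> int \<Rightarrow> (quat_unit option \<Rightarrow> int) \<Rightarrow> nat \<Rightarrow> nat \<Rightarrow> int" where
  "D28_frame u t x =
    frame_row 5 u t x (code_block 28 D28) (lift_unit 28 unit_mat) (insert None (Some ` UNIV))"

lemma dot_D28_frame:
  fixes x :: "quat_unit option \<Rightarrow> int"
  assumes "i < 56" "j < 56"
  shows "dot 56 (D28_frame u t x i) (D28_frame u t x j) = 5 * kronecker i j
    * (6 * u^2 + 2 * u * t + 5 * t^2 + 5 * (\<Sum>a\<in>insert None (Some ` UNIV). x a ^ 2))"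
proof -
  let ?A = "insert None (Some ` (UNIV :: quat_unit set))"
  let ?G = "code_block 28 D28" and ?V = "lift_unit 28 unit_mat"
  have ij: "i < 28 + 28" "j < 28 + 28"
    using assms by simp_all
  have "finite ?A"
    by (simp add: UNIV_quat_unit)
  have "dot (28 + 28) (D28_frame u t x i) (D28_frame u t x j)
    = kronecker i j * (30 * u^2 + 2 * 5 * u * t + 5^2 * (t^2 + (\<Sum>a\<in>?A. x a ^ 2)))"
    unfolding D28_frame_def
  proof (rule dot_frame_row[OF \<open>finite ?A\<close> ij])
    show "dot (28 + 28) (?G i) (?G j) = 30 * kronecker i j"
      using dot_code_block[where p = 29, OF D28_skew D28_gram ij] by simp
    show "?G i j + ?G j i = 2 * kronecker i j"
      using D28_skew ij by (rule code_block_sym)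
    show "dot (28 + 28) (?G i) (?V a j) + dot (28 + 28) (?G j) (?V a i) = 0" if "a \<in> ?A" for a
      using D28_skew unit_mat_skew D28_unit_mat_sym that ij by (rule dot_code_block_lift_unit)
    show "?V a i j + ?V a j i = 0" if "a \<in> ?A" for a
      using unit_mat_skew that ij by (rule lift_unit_skew)
    show "dot (28 + 28) (?V a i) (?V a j) = kronecker i j" if "a \<in> ?A" for a
      using unit_mat_orth that ij by (rule dot_lift_unit_orth)
    show "dot (28 + 28) (?V a i) (?V b j) + dot (28 + 28) (?V b i) (?V a j) = 0"
      if "a \<in> ?A" "b \<in> ?A" "a \<noteq> b" for a b
      using unit_mat_skew unit_mat_anticomm that ij by (rule dot_lift_unit_anticomm)
  qed
  then show ?thesis
    by (simp add: algebra_simps)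
qed

lemma D28_frame_mod_in_code:
  assumes "i < 56"
  shows "(\<lambda>j. if j < 56 then D28_frame u t x i j mod 5 else 0) \<in> C5_D28"
proof -
  let ?G = "code_block 28 D28"
  obtain w where w: "\<And>j. j < 28 + 28 \<Longrightarrow> (\<Sum>m<28. w m * ?G m j) mod 5 = ?G i j mod 5"
    by (rule code_block_row_cong[of 28 D28 29 5 i]) (use D28_skew D28_gram assms in auto)
  have "(\<Sum>m<28. u * w m * G_C5 m j) mod 5 = D28_frame u t x i j mod 5" if "j < 56" for j
  proof -
    have "(\<Sum>m<28. w m * ?G m j) mod 5 = ?G i j mod 5"
      using w[of j] that by simp
    then have "u * (\<Sum>m<28. w m * ?G m j) mod 5 = u * ?G i j mod 5"
      by (metis mod_mult_right_eq)
    moreover have "(\<Sum>m<28. u * w m * G_C5 m j) = u * (\<Sum>m<28. w m * ?G m j)"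
      by (simp add: G_C5_eq_code_block sum_distrib_left mult.assoc)
    ultimately show ?thesis
      by (simp add: D28_frame_def frame_row_def)
  qed
  then show ?thesis
    unfolding C5_D28_def by (rule gen_code_memI)
qed

lemma has_frame_of_binary_form:
  fixes u t :: int and x :: "quat_unit option \<Rightarrow> int" and k :: nat
  assumes "int k = 6 * u^2 + 2 * u * t + 5 * t^2 + 5 * (\<Sum>a\<in>insert None (Some ` UNIV). x a ^ 2)"
  shows "has_frame (constructionA 5 56 C5_D28) 56 (real k)"
proof (rule has_frame_constructionA[where f = "D28_frame u t x"])
  show "(\<lambda>j. if j < 56 then D28_frame u t x i j mod int 5 else 0) \<in> C5_D28" if "i < 56" for i
    using D28_frame_mod_in_code[OF that] by (simp only: of_nat_numeral)
  show "dot 56 (D28_frame u t x i) (D28_frame u t x j) = int (5 * k) * kronecker i j"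
    if "i < 56" "j < 56" for i j
    using dot_D28_frame[OF that] assms by simp
qed simp

lemma has_frame_of_binary_form_nat:
  fixes u t :: int and k n :: nat
  assumes "int k = 6 * u^2 + 2 * u * t + 5 * t^2 + 5 * int n"
  shows "has_frame (constructionA 5 56 C5_D28) 56 (real k)"
proof -
  obtain a b c d where abcd: "int n = a^2 + b^2 + c^2 + d^2"
    using sum_of_four_squares_of_nat[of n] unfolding sum_of_four_squares_def by blast
  define x where
    "x v = (case v of None \<Rightarrow> a | Some Ui \<Rightarrow> b | Some Uj \<Rightarrow> c | Some Uk \<Rightarrow> d)" for v
  have "(\<Sum>v\<in>insert None (Some ` UNIV). x v ^ 2) = int n"
    by (simp add: x_def UNIV_quat_unit abcd add.assoc)
  then show ?thesis
    using assms by (intro has_frame_of_binary_form[of k u t x]) simp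
qed

lemma binary_form_plus_multiple_of_5:
  fixes k :: nat
  assumes "5 \<le> k" "k \<notin> {7, 8, 12, 17}"
  obtains u t :: int and n :: nat where "int k = 6 * u^2 + 2 * u * t + 5 * t^2 + 5 * int n"
proof -
  have "\<exists>u t :: int. 6 * u^2 + 2 * u * t + 5 * t^2 \<le> int k \<and> 5 dvd int k - (6 * u^2 + 2 * u * t + 5 * t^2)"
  proof -
    consider "k mod 5 = 0" | "k mod 5 = 1" | "k mod 5 = 2" | "k mod 5 = 3" | "k mod 5 = 4"
      by arith
    then show ?thesis
    proof cases
      case 1
      then show ?thesis by (intro exI[of _ 0]) (simp; presburger)
    next
      case 2
      then show ?thesis using assms by (intro exI[of _ 1] exI[of _ 0]) (simp; presburger)
    next
      case 3
      then show ?thesis using assms by (intro exI[of _ "-1"] exI[of _ 2]) (simp; presburger)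
    next
      case 4
      then show ?thesis using assms by (intro exI[of _ 1] exI[of _ 1]) (simp; presburger)
    next
      case 5
      then show ?thesis using assms by (intro exI[of _ 1] exI[of _ "-1"]) (simp; presburger)
    qed
  qed
  then obtain u t :: int where "6 * u^2 + 2 * u * t + 5 * t^2 \<le> int k"
      "5 dvd int k - (6 * u^2 + 2 * u * t + 5 * t^2)"
    by blast
  then show ?thesis
    by (intro that[of u t "nat ((int k - (6 * u^2 + 2 * u * t + 5 * t^2)) div 5)"]) auto
qed

theorem lemma6p1:
  fixes k :: nat
  assumes "k \<ge> 5"
    and "\<not> (\<exists>m1 m2 m3 m4 m5 :: nat. k = 2^m1 * 3^m2 * 7^m3 * 17^m4 * 23^m5)"
  shows "has_frame (constructionA 5 56 C5_D28) 56 (real k)"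
proof -
  have "(7::nat) = 2^0 * 3^0 * 7^1 * 17^0 * 23^0" "(8::nat) = 2^3 * 3^0 * 7^0 * 17^0 * 23^0"
    "(12::nat) = 2^2 * 3^1 * 7^0 * 17^0 * 23^0" "(17::nat) = 2^0 * 3^0 * 7^0 * 17^1 * 23^0"
    by simp_all
  then have "k \<notin> {7, 8, 12, 17}"
    using assms(2) by blast
  with assms(1) obtain u t n where "int k = 6 * u^2 + 2 * u * t + 5 * t^2 + 5 * int n"
    by (rule binary_form_plus_multiple_of_5)
  then show ?thesis
    by (rule has_frame_of_binary_form_nat)
qed

end
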